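(* Let $X$ be a CAT(0) Euclidean polygonal complex, let $x_1,x_2,x_3,x_4\in X$, and for $1\le i\le 4$ let $W_i$ be the full triangle spanned by the three points $\{x_1,x_2,x_3,x_4\}\setminus\{x_i\}$. If $p\in W_i$ for some $i$, then there exists $j\neq i$ with $p\in W_j$.
   Context: A CAT(0) Euclidean polygonal complex is a 2-dimensional polygonal complex whose cells are convex Euclidean polygons, with its induced length metric, assumed CAT(0). $\overline{ab}$ denotes the unique geodesic between $a,b$; $\triangle(x,y,z)=\overline{xy}\cup\overline{yz}\cup\overline{zx}$. The full triangle $\blacktriangle(x,y,z)$ is the union of $\triangle(x,y,z)$ with the set of points $p\in X\setminus\triangle(x,y,z)$ for which $\triangle(x,y,z)$ is not null-homotopic in $X\setminus\{p\}$. *)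

theory Defs
  imports "HOL-Analysis.Analysis"
begin

text \<open>A cell of a Euclidean polygonal complex: a compact convex polytope P in the
  Euclidean plane together with its characteristic map f into X.\<close>
type_synonym 'a cell = "(real^2) set \<times> (real^2 \<Rightarrow> 'a)"

text \<open>Euclidean polygonal complex structure on the whole space (type) 'a, following
  Bridson--Haefliger I.7.37 with kappa = 0 and dimension 2.\<close>
definition euclidean_polygonal_structure :: "'a cell set \<Rightarrow> bool" where
  "euclidean_polygonal_structure C \<longleftrightarrow>
     (\<forall>(P,f)\<in>C. (\<exists>V. finite V \<and> V \<noteq> {} \<and> P = convex hull V) \<and> inj_on f P) \<and>
     (\<Union>(P,f)\<in>C. f ` P) = UNIV \<and>
     (\<exists>(P,f)\<in>C. interior P \<noteq> {}) \<and>
     (\<forall>(P,f)\<in>C. \<forall>(P',f')\<in>C. \<forall>u\<in>P. \<forall>u'\<in>P'. f u = f' u' \<longrightarrow>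
        (\<exists>F F' h. F face_of P \<and> u \<in> rel_interior F \<and> F' face_of P' \<and> u' \<in> rel_interior F' \<and>
           h ` F = F' \<and> (\<forall>y\<in>F. \<forall>z\<in>F. dist (h y) (h z) = dist y z) \<and>
           (\<forall>y\<in>F. f y = f' (h y))))"

definition string_lengths :: "'a cell set \<Rightarrow> 'a \<Rightarrow> 'a \<Rightarrow> real set" where
  "string_lengths C x y =
     {(\<Sum>i<n. dist (u i) (v i)) | n pts u v cell.
        pts 0 = x \<and> pts n = y \<and>
        (\<forall>i<n. cell i \<in> C \<and> u i \<in> fst (cell i) \<and> v i \<in> fst (cell i) \<and>
               snd (cell i) (u i) = pts i \<and> snd (cell i) (v i) = pts (Suc i))}"

definition induced_length_metric :: "'a::metric_space cell set \<Rightarrow> bool" where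
  "induced_length_metric C \<longleftrightarrow> (\<forall>x y. dist x y = Inf (string_lengths C x y))"

definition euclidean_polygonal_complex :: "'a::metric_space cell set \<Rightarrow> bool" where
  "euclidean_polygonal_complex C \<longleftrightarrow>
     euclidean_polygonal_structure C \<and> induced_length_metric C"

definition geod_path :: "'a::metric_space \<Rightarrow> 'a \<Rightarrow> (real \<Rightarrow> 'a) \<Rightarrow> bool" where
  "geod_path a b g \<longleftrightarrow> g 0 = a \<and> g 1 = b \<and>
     (\<forall>s\<in>{0..1}. \<forall>t\<in>{0..1}. dist (g s) (g t) = \<bar>s - t\<bar> * dist a b)"

definition CAT0 :: "'a::metric_space itself \<Rightarrow> bool" where
  "CAT0 _ \<longleftrightarrow>
     (\<forall>a b::'a. \<exists>g. geod_path a b g) \<and>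
     (\<forall>(a::'a) b c g1 g2 g3. geod_path a b g1 \<and> geod_path b c g2 \<and> geod_path c a g3 \<longrightarrow>
        (\<exists>a' b' c' :: real^2. dist a' b' = dist a b \<and> dist b' c' = dist b c \<and> dist c' a' = dist c a \<and>
           (\<forall>(g,p,q)\<in>{(g1,a',b'),(g2,b',c'),(g3,c',a')}. \<forall>(h,p',q')\<in>{(g1,a',b'),(g2,b',c'),(g3,c',a')}.
              \<forall>s\<in>{0..1}. \<forall>t\<in>{0..1}.
                dist (g s) (h t) \<le> dist (p + s *\<^sub>R (q - p)) (p' + t *\<^sub>R (q' - p')))))"

definition seg :: "'a::metric_space \<Rightarrow> 'a \<Rightarrow> 'a set" where
  "seg a b = {z. \<exists>g. geod_path a b g \<and> z \<in> g ` {0..1}}"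

definition triangle :: "'a::metric_space \<Rightarrow> 'a \<Rightarrow> 'a \<Rightarrow> 'a set" where
  "triangle x y z = seg x y \<union> seg y z \<union> seg z x"

definition full_triangle :: "'a::metric_space \<Rightarrow> 'a \<Rightarrow> 'a \<Rightarrow> 'a set" where
  "full_triangle x y z = triangle x y z \<union>
     {p. p \<notin> triangle x y z \<and>
         (\<forall>g1 g2 g3. geod_path x y g1 \<and> geod_path y z g2 \<and> geod_path z x g3 \<longrightarrow>
            \<not> homotopic_loops (- {p}) (g1 +++ g2 +++ g3) (\<lambda>_. x))}"

definition Wfull :: "'a::metric_space \<Rightarrow> 'a \<Rightarrow> 'a \<Rightarrow> 'a \<Rightarrow> nat \<Rightarrow> 'a set" where
  "Wfull x1 x2 x3 x4 i =
     (if i = 1 then full_triangle x2 x3 x4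
      else if i = 2 then full_triangle x1 x3 x4
      else if i = 3 then full_triangle x1 x2 x4
      else full_triangle x1 x2 x3)"

end

(*
  In a CAT(0) space geodesics are unique. For a point p off the geodesic segments between
  a, b, c, p lies in the full triangle spanned by them exactly when the broken geodesic
  a -> b -> c is not homotopic rel endpoints to the geodesic a -> c in X - {p}. In the
  fundamental groupoid of X - {p} these relations are invariant under permuting a, b, c and
  satisfy a cocycle rule: [ab][bd] = [ad], [bd][dc] = [bc] and [ad][dc] = [ac] give
  [ab][bc] = [ac]. So if p lies in the full triangle abc, it lies in one of the full
  triangles abd, bcd, acd; if p lies on one of the six segments, it lies on the boundary of
  one of these three.
*)

theory Submission
  imports Defs
begin

section \<open>Homotopies of paths in arbitrary topological spaces\<close>

text \<open>The library states the groupoid laws (homotopic_paths_rid etc.) with linepath, i.e. in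
  real normed vector spaces; with constant paths instead they hold in any topological space,
  since all of them are reparametrisations in a convex parameter domain.\<close>

lemma homotopic_paths_compose_convex:
  fixes \<alpha> \<beta> :: "real \<Rightarrow> 'b::real_normed_vector"
  assumes "convex K" "continuous_on K h" "h \<in> K \<rightarrow> S"
    and "path \<alpha>" "path_image \<alpha> \<subseteq> K" "path \<beta>" "path_image \<beta> \<subseteq> K"
    and "pathstart \<alpha> = pathstart \<beta>" "pathfinish \<alpha> = pathfinish \<beta>"
  shows "homotopic_paths S (h \<circ> \<alpha>) (h \<circ> \<beta>)"
proof -
  have "homotopic_paths K \<alpha> \<beta>"
    using assms by (intro homotopic_paths_linear closed_segment_subset) (auto simp: path_image_def)
  then show ?thesis
    using assms(2,3) by (rule homotopic_paths_continuous_image)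
qed

lemma homotopic_paths_reparametrize_same_ends:
  assumes "path p" "path_image p \<subseteq> S"
    and "path f" "path_image f \<subseteq> {0..1}" "path g" "path_image g \<subseteq> {0..1}"
    and "pathstart f = pathstart g" "pathfinish f = pathfinish g"
  shows "homotopic_paths S (p \<circ> f) (p \<circ> g)"
  using assms
  by (intro homotopic_paths_compose_convex) (auto simp: path_def path_image_def)

lemma compose_linepath_0_1: "p \<circ> linepath (0::real) 1 = p"
  by (simp add: linepath_def o_def)

lemma homotopic_paths_rid_const:
  assumes "path p" "path_image p \<subseteq> S"
  shows "homotopic_paths S (p +++ (\<lambda>_. pathfinish p)) p"
proof -
  have "homotopic_paths S (p \<circ> (linepath 0 1 +++ linepath 1 1)) (p \<circ> linepath 0 1)"
    using assms by (intro homotopic_paths_reparametrize_same_ends)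
      (auto simp: path_image_join closed_segment_eq_real_ivl)
  moreover have "p \<circ> (linepath 0 1 +++ linepath 1 1) = p +++ (\<lambda>_. pathfinish p)"
    by (auto simp: joinpaths_def linepath_def pathfinish_def)
  ultimately show ?thesis
    by (simp only: compose_linepath_0_1)
qed

lemma homotopic_paths_lid_const:
  assumes "path p" "path_image p \<subseteq> S"
  shows "homotopic_paths S ((\<lambda>_. pathstart p) +++ p) p"
proof -
  have "homotopic_paths S (p \<circ> (linepath 0 0 +++ linepath 0 1)) (p \<circ> linepath 0 1)"
    using assms by (intro homotopic_paths_reparametrize_same_ends)
      (auto simp: path_image_join closed_segment_eq_real_ivl)
  moreover have "p \<circ> (linepath 0 0 +++ linepath 0 1) = (\<lambda>_. pathstart p) +++ p"
    by (auto simp: joinpaths_def linepath_def pathstart_def)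
  ultimately show ?thesis
    by (simp only: compose_linepath_0_1)
qed

lemma homotopic_paths_rinv_const:
  assumes "path p" "path_image p \<subseteq> S"
  shows "homotopic_paths S (p +++ reversepath p) (\<lambda>_. pathstart p)"
proof -
  have "homotopic_paths S (p \<circ> (linepath 0 1 +++ linepath 1 0)) (p \<circ> linepath 0 0)"
    using assms by (intro homotopic_paths_reparametrize_same_ends)
      (auto simp: path_image_join closed_segment_eq_real_ivl)
  moreover have "p \<circ> (linepath 0 1 +++ linepath 1 0) = p +++ reversepath p"
    by (auto simp: joinpaths_def linepath_def reversepath_def algebra_simps)
  moreover have "p \<circ> linepath 0 0 = (\<lambda>_. pathstart p)"
    by (auto simp: linepath_def pathstart_def)
  ultimately show ?thesis
    by simp
qed

lemma homotopic_paths_linv_const: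
  assumes "path p" "path_image p \<subseteq> S"
  shows "homotopic_paths S (reversepath p +++ p) (\<lambda>_. pathfinish p)"
  using homotopic_paths_rinv_const [of "reversepath p" S] assms by simp

lemma homotopic_paths_join_imp_reversepath_join:
  assumes pqr: "homotopic_paths S (p +++ q) r" and pq: "pathfinish p = pathstart q"
  shows "homotopic_paths S (reversepath p +++ r) q"
proof -
  have "path (p +++ q)" "path_image (p +++ q) \<subseteq> S"
    using pqr homotopic_paths_imp_path homotopic_paths_imp_subset by blast+
  then have p: "path p" "path_image p \<subseteq> S" and q: "path q" "path_image q \<subseteq> S"
    using pq by (auto simp: path_image_join)
  have "homotopic_paths S (reversepath p +++ r) (reversepath p +++ (p +++ q))"
    using pqr p by (intro homotopic_paths_join)
      (auto simp: homotopic_paths_sym_eq homotopic_paths_imp_pathstart)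
  also have "homotopic_paths S \<dots> ((reversepath p +++ p) +++ q)"
    using p q pq by (intro homotopic_paths_assoc) auto
  also have "homotopic_paths S \<dots> ((\<lambda>_. pathfinish p) +++ q)"
    using p q pq by (intro homotopic_paths_join homotopic_paths_linv_const) auto
  also have "homotopic_paths S \<dots> q"
    using homotopic_paths_lid_const [OF q] pq by simp
  finally show ?thesis .
qed

lemma homotopic_paths_join_reversepath_const_iff:
  assumes p: "path p" "path_image p \<subseteq> S" and q: "path q" "path_image q \<subseteq> S"
    and ends: "pathstart p = pathstart q" "pathfinish p = pathfinish q"
  shows "homotopic_paths S (p +++ reversepath q) (\<lambda>_. pathstart p) \<longleftrightarrow> homotopic_paths S p q"
proof
  assume "homotopic_paths S (p +++ reversepath q) (\<lambda>_. pathstart p)"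
  then have "homotopic_paths S (reversepath p +++ (\<lambda>_. pathstart p)) (reversepath q)"
    using ends by (intro homotopic_paths_join_imp_reversepath_join) auto
  moreover have "homotopic_paths S (reversepath p +++ (\<lambda>_. pathstart p)) (reversepath p)"
    using homotopic_paths_rid_const [of "reversepath p" S] p by simp
  ultimately have "homotopic_paths S (reversepath p) (reversepath q)"
    by (metis homotopic_paths_sym homotopic_paths_trans)
  then show "homotopic_paths S p q"
    by (simp add: homotopic_paths_reversepath)
next
  assume "homotopic_paths S p q"
  then have "homotopic_paths S (p +++ reversepath q) (q +++ reversepath q)"
    using q ends by (intro homotopic_paths_join) auto
  also have "homotopic_paths S \<dots> (\<lambda>_. pathstart p)"
    using homotopic_paths_rinv_const [OF q] ends by simp
  finally show "homotopic_paths S (p +++ reversepath q) (\<lambda>_. pathstart p)" .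
qed

lemma homotopic_loops_imp_homotopic_paths_const:
  assumes "homotopic_loops S \<gamma> (\<lambda>_. a)"
  shows "homotopic_paths S \<gamma> (\<lambda>_. pathstart \<gamma>)"
proof -
  let ?K = "{0..1} \<times> {0..1} :: (real \<times> real) set"
  obtain H where contH: "continuous_on ?K H" and HS: "H \<in> ?K \<rightarrow> S"
    and H0: "\<forall>t\<in>{0..1}. H (0, t) = \<gamma> t" and H1: "\<forall>t\<in>{0..1}. H (1, t) = a"
    and H_loop: "\<forall>s\<in>{0..1}. pathfinish (H \<circ> Pair s) = pathstart (H \<circ> Pair s)"
    using assms unfolding homotopic_loops by blast
  have H_top: "H (s, 1) = H (s, 0)" if "s \<in> {0..1}" for s
    using H_loop that by (auto simp: pathstart_def pathfinish_def)
  have \<gamma>: "path \<gamma>" "path_image \<gamma> \<subseteq> S"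
    using assms homotopic_loops_imp_path homotopic_loops_imp_subset by blast+
  have convK: "convex ?K"
    by (simp add: convex_Times)
  have in_K: "closed_segment u v \<subseteq> ?K" if "u \<in> ?K" "v \<in> ?K" for u v
    using that convK by (simp add: closed_segment_subset)
  \<comment> \<open>In the square, the left edge is homotopic to the path along the other three edges;
    the homotopy H maps that path to the bottom edge, a constant, and the bottom edge reversed.\<close>
  define \<beta> :: "real \<Rightarrow> real \<times> real"
    where "\<beta> = linepath (0, 0) (1, 0) +++ linepath (1, 0) (1, 1) +++ linepath (1, 1) (0, 1)"
  define q where "q = H \<circ> linepath (0, 0) (1, 0)"
  have q: "path q" "path_image q \<subseteq> S"
    unfolding q_def using in_K [of "(0, 0)" "(1, 0)"] HS
    by (auto intro!: path_continuous_image continuous_on_subset [OF contH] simp: path_image_compose)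
  have "homotopic_paths S \<gamma> (H \<circ> linepath (0, 0) (0, 1))"
    using \<gamma> H0 by (intro homotopic_paths_eq) (auto simp: linepath_def)
  also have edges: "homotopic_paths S \<dots> (H \<circ> \<beta>)"
    unfolding \<beta>_def
    by (rule homotopic_paths_compose_convex [OF convK contH HS];
        simp add: path_image_join; intro conjI in_K; simp)
  also have "homotopic_paths S \<dots> (q \<circ> (linepath 0 1 +++ linepath 1 1 +++ linepath 1 0))"
  proof (rule homotopic_paths_eq)
    show "path (H \<circ> \<beta>)" "path_image (H \<circ> \<beta>) \<subseteq> S"
      using edges homotopic_paths_imp_path homotopic_paths_imp_subset by blast+
    show "(H \<circ> \<beta>) t = (q \<circ> (linepath 0 1 +++ linepath 1 1 +++ linepath 1 0)) t"
      if "t \<in> {0..1}" for t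
      using that H1 H_top by (auto simp: \<beta>_def q_def joinpaths_def linepath_def)
  qed
  also have "homotopic_paths S \<dots> (q \<circ> linepath 0 0)"
    using q by (intro homotopic_paths_reparametrize_same_ends)
      (auto simp: path_image_join closed_segment_eq_real_ivl)
  also have "q \<circ> linepath 0 0 = (\<lambda>_. pathstart \<gamma>)"
    using H0 by (auto simp: q_def linepath_def pathstart_def)
  finally show ?thesis .
qed


section \<open>Geodesics in CAT(0) spaces\<close>

lemma geod_path_reversepath:
  assumes "geod_path a b g"
  shows "geod_path b a (reversepath g)"
proof -
  have "dist (g (1 - s)) (g (1 - t)) = \<bar>s - t\<bar> * dist b a" if "s \<in> {0..1}" "t \<in> {0..1}" for s t
    using assms that unfolding geod_path_def by (auto simp: dist_commute abs_minus_commute)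
  then show ?thesis
    using assms by (simp add: geod_path_def reversepath_def)
qed

lemma geod_path_imp_path: "geod_path a b g \<Longrightarrow> path g"
  unfolding path_def geod_path_def
  by (rule lipschitz_on_continuous_on [where L = "dist a b"]) (auto simp: lipschitz_on_def dist_real_def)

lemma CAT0_geod_path_unique:
  assumes "CAT0 TYPE('a::metric_space)" "geod_path a b g" "geod_path a b h" "s \<in> {0..1}"
  shows "g s = (h s :: 'a)"
proof -
  \<comment> \<open>Compare the degenerate triangle with sides g, the constant path at b and h reversed:
    in its comparison triangle the points of g at s and of h reversed at 1 - s coincide.\<close>
  have "geod_path a b g \<and> geod_path b b (\<lambda>_. b) \<and> geod_path b a (reversepath h)"
    using assms(2) geod_path_reversepath [OF assms(3)] by (simp add: geod_path_def)
  then obtain a' b' c' :: "real^2" where "dist b' c' = dist b b"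
    and cmp: "\<forall>(g1, p, q)\<in>{(g, a', b'), (\<lambda>_. b, b', c'), (reversepath h, c', a')}.
      \<forall>(g2, p', q')\<in>{(g, a', b'), (\<lambda>_. b, b', c'), (reversepath h, c', a')}.
      \<forall>s\<in>{0..1}. \<forall>t\<in>{0..1}. dist (g1 s) (g2 t) \<le> dist (p + s *\<^sub>R (q - p)) (p' + t *\<^sub>R (q' - p'))"
    using assms(1) unfolding CAT0_def by blast
  then have "c' = b'"
    by simp
  have "dist (g s) (reversepath h (1 - s)) \<le> dist (a' + s *\<^sub>R (b' - a')) (c' + (1 - s) *\<^sub>R (a' - c'))"
    using cmp assms(4) by fastforce
  also have "\<dots> = 0"
    using \<open>c' = b'\<close> by (simp add: algebra_simps)
  finally show ?thesis
    by (simp add: reversepath_def)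
qed

text \<open>Clamping the parameter to [0, 1] makes geo a b determined by its values there, so that
  uniqueness of geodesics yields equations of functions such as reversepath_geo.\<close>

definition geo :: "'a::metric_space \<Rightarrow> 'a \<Rightarrow> real \<Rightarrow> 'a" where
  "geo a b = (SOME g. geod_path a b g) \<circ> (\<lambda>t. max 0 (min 1 t))"

lemma geod_path_geo:
  assumes "CAT0 TYPE('a::metric_space)"
  shows "geod_path a b (geo a b :: real \<Rightarrow> 'a)"
proof -
  obtain g :: "real \<Rightarrow> 'a" where "geod_path a b g"
    using assms unfolding CAT0_def by blast
  then have "geod_path a b (SOME g. geod_path a b g)"
    by (rule someI [where P = "geod_path a b"])
  then show ?thesis
    by (simp add: geo_def geod_path_def)
qed

lemma geod_path_eq_geo:
  assumes "CAT0 TYPE('a::metric_space)" "geod_path a b (g :: real \<Rightarrow> 'a)" "t \<in> {0..1}"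
  shows "g t = geo a b t"
  using CAT0_geod_path_unique geod_path_geo assms by blast

lemma reversepath_geo:
  assumes "CAT0 TYPE('a::metric_space)"
  shows "reversepath (geo a b) = (geo b a :: real \<Rightarrow> 'a)"
proof
  fix t :: real
  let ?c = "\<lambda>t::real. max 0 (min 1 t)"
  have "reversepath (geo a b) t = geo a b (1 - ?c t)"
    by (simp add: reversepath_def geo_def max_def min_def)
  also have "\<dots> = reversepath (geo a b) (?c t)"
    by (simp add: reversepath_def)
  also have "\<dots> = geo b a (?c t)"
    using assms geod_path_reversepath [OF geod_path_geo [OF assms]] by (rule geod_path_eq_geo) auto
  also have "\<dots> = geo b a t"
    by (simp add: geo_def max_def min_def)
  finally show "reversepath (geo a b) t = geo b a t" .
qed

lemma path_geo: "CAT0 TYPE('a::metric_space) \<Longrightarrow> path (geo a b :: real \<Rightarrow> 'a)"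
  using geod_path_geo geod_path_imp_path by blast

lemma pathstart_geo: "CAT0 TYPE('a::metric_space) \<Longrightarrow> pathstart (geo a b :: real \<Rightarrow> 'a) = a"
  using geod_path_geo by (auto simp: geod_path_def pathstart_def)

lemma pathfinish_geo: "CAT0 TYPE('a::metric_space) \<Longrightarrow> pathfinish (geo a b :: real \<Rightarrow> 'a) = b"
  using geod_path_geo by (auto simp: geod_path_def pathfinish_def)

lemma seg_eq_path_image_geo:
  assumes "CAT0 TYPE('a::metric_space)"
  shows "seg a b = path_image (geo a b :: real \<Rightarrow> 'a)"
  using geod_path_eq_geo [OF assms] geod_path_geo [OF assms]
  unfolding seg_def path_image_def by fastforce

lemma seg_commute: "CAT0 TYPE('a::metric_space) \<Longrightarrow> seg a b = seg b (a :: 'a)"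
  by (metis seg_eq_path_image_geo path_image_reversepath reversepath_geo)

lemma triangle_commute:
  assumes "CAT0 TYPE('a::metric_space)"
  shows "triangle b a c = triangle a b (c :: 'a)" "triangle a c b = triangle a b (c :: 'a)"
  using seg_commute [OF assms] unfolding triangle_def by blast+


section \<open>Full triangles\<close>

definition detour_homotopic :: "'a::metric_space \<Rightarrow> 'a \<Rightarrow> 'a \<Rightarrow> 'a \<Rightarrow> bool" where
  "detour_homotopic p a b c \<longleftrightarrow> homotopic_paths (- {p}) (geo a b +++ geo b c) (geo a c)"

lemma detour_homotopic_reverse:
  assumes "CAT0 TYPE('a::metric_space)" "detour_homotopic p a b (c :: 'a)"
  shows "detour_homotopic p c b a"
proof -
  have "homotopic_paths (- {p}) (reversepath (geo a b +++ geo b c)) (reversepath (geo a c))"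
    using assms(2) unfolding detour_homotopic_def by (rule homotopic_paths_reversepath_D)
  then show ?thesis
    using assms(1) by (simp add: detour_homotopic_def reversepath_joinpaths reversepath_geo
        pathstart_geo pathfinish_geo)
qed

lemma detour_homotopic_swap:
  assumes "CAT0 TYPE('a::metric_space)" "detour_homotopic p a b (c :: 'a)"
  shows "detour_homotopic p b a c"
  using homotopic_paths_join_imp_reversepath_join [of "- {p}" "geo a b" "geo b c" "geo a c"] assms
  by (simp add: detour_homotopic_def reversepath_geo pathstart_geo pathfinish_geo)

lemma detour_homotopic_swap23:
  assumes "CAT0 TYPE('a::metric_space)" "detour_homotopic p a b (c :: 'a)"
  shows "detour_homotopic p a c b"
  using assms detour_homotopic_reverse detour_homotopic_swap by metis

lemma detour_homotopic_cocycle: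
  assumes C: "CAT0 TYPE('a::metric_space)"
    and abd: "detour_homotopic p a b d" and bdc: "detour_homotopic p b d c"
    and adc: "detour_homotopic p a d (c :: 'a)"
  shows "detour_homotopic p a b c"
proof -
  let ?S = "- {p}"
  have sub: "path_image (geo a b) \<subseteq> ?S" "path_image (geo b d) \<subseteq> ?S" "path_image (geo d c) \<subseteq> ?S"
    using abd bdc C homotopic_paths_imp_subset
    by (fastforce simp: detour_homotopic_def path_image_join pathstart_geo pathfinish_geo)+
  note geo = path_geo [OF C] pathstart_geo [OF C] pathfinish_geo [OF C]
  have "homotopic_paths ?S (geo a b +++ geo b c) (geo a b +++ (geo b d +++ geo d c))"
    using bdc sub geo unfolding detour_homotopic_def
    by (intro homotopic_paths_join) (simp_all add: homotopic_paths_sym_eq)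
  also have "homotopic_paths ?S \<dots> ((geo a b +++ geo b d) +++ geo d c)"
    using sub geo by (intro homotopic_paths_assoc) simp_all
  also have "homotopic_paths ?S \<dots> (geo a d +++ geo d c)"
    using abd sub geo unfolding detour_homotopic_def by (intro homotopic_paths_join) simp_all
  also have "homotopic_paths ?S \<dots> (geo a c)"
    using adc unfolding detour_homotopic_def .
  finally show ?thesis
    unfolding detour_homotopic_def .
qed

lemma full_triangle_iff_not_detour_homotopic:
  assumes C: "CAT0 TYPE('a::metric_space)" and off: "p \<notin> triangle a b (c :: 'a)"
  shows "p \<in> full_triangle a b c \<longleftrightarrow> \<not> detour_homotopic p a b c"
proof -
  let ?S = "- {p}" and ?L = "geo a b +++ geo b c +++ geo c a"
  note geo = path_geo [OF C] pathstart_geo [OF C] pathfinish_geo [OF C]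
  have sub: "path_image (geo a b) \<subseteq> ?S" "path_image (geo b c) \<subseteq> ?S"
    "path_image (geo c a) \<subseteq> ?S" "path_image (geo a c) \<subseteq> ?S"
    using off seg_commute [OF C, of a c] by (auto simp: triangle_def seg_eq_path_image_geo [OF C])
  have "homotopic_paths ?S ?L (\<lambda>_. a) \<longleftrightarrow>
        homotopic_paths ?S ((geo a b +++ geo b c) +++ reversepath (geo a c)) (\<lambda>_. a)"
  proof -
    have "homotopic_paths ?S ?L ((geo a b +++ geo b c) +++ geo c a)"
      using sub geo by (intro homotopic_paths_assoc) simp_all
    then have "homotopic_paths ?S ?L ((geo a b +++ geo b c) +++ reversepath (geo a c))"
      by (simp add: reversepath_geo [OF C])
    then show ?thesis
      by (meson homotopic_paths_sym homotopic_paths_trans)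
  qed
  also have "\<dots> \<longleftrightarrow> detour_homotopic p a b c"
    unfolding detour_homotopic_def using sub geo
    by (subst homotopic_paths_join_reversepath_const_iff [symmetric]) (simp_all add: path_image_join)
  finally have L: "homotopic_paths ?S ?L (\<lambda>_. a) \<longleftrightarrow> detour_homotopic p a b c" .
  show ?thesis
  proof
    assume "p \<in> full_triangle a b c"
    then have "\<not> homotopic_loops ?S ?L (\<lambda>_. a)"
      using off geod_path_geo [OF C] unfolding full_triangle_def by blast
    moreover have "homotopic_loops ?S ?L (\<lambda>_. a)" if "homotopic_paths ?S ?L (\<lambda>_. a)"
    proof (rule homotopic_paths_imp_homotopic_loops [OF that])
      show "pathfinish ?L = pathstart ?L" "pathfinish (\<lambda>_::real. a) = pathstart ?L"
        using geo by (simp_all add: pathfinish_def [of "\<lambda>_. a"])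
    qed
    ultimately show "\<not> detour_homotopic p a b c"
      using L by blast
  next
    assume nd: "\<not> detour_homotopic p a b c"
    have "\<not> homotopic_loops ?S (g1 +++ g2 +++ g3) (\<lambda>_. a)"
      if g: "geod_path a b g1" "geod_path b c g2" "geod_path c a g3" for g1 g2 g3
    proof
      assume loop: "homotopic_loops ?S (g1 +++ g2 +++ g3) (\<lambda>_. a)"
      have "pathstart (g1 +++ g2 +++ g3) = a"
        using g(1) by (simp add: geod_path_def pathstart_def joinpaths_def)
      then have "homotopic_paths ?S (g1 +++ g2 +++ g3) (\<lambda>_. a)"
        using homotopic_loops_imp_homotopic_paths_const [OF loop] by simp
      moreover have "homotopic_paths ?S ?L (g1 +++ g2 +++ g3)"
      proof (rule homotopic_paths_eq)
        show "path ?L" "path_image ?L \<subseteq> ?S"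
          using sub geo by (simp_all add: path_image_join)
        have "g1 s = geo a b s" "g2 s = geo b c s" "g3 s = geo c a s" if "s \<in> {0..1}" for s
          using that geod_path_eq_geo [OF C] g by blast+
        then show "?L t = (g1 +++ g2 +++ g3) t" if "t \<in> {0..1}" for t
          using that by (simp add: joinpaths_def)
      qed
      ultimately show False
        using L nd homotopic_paths_trans by blast
    qed
    then show "p \<in> full_triangle a b c"
      using off unfolding full_triangle_def by blast
  qed
qed

lemma full_triangle_commute:
  assumes C: "CAT0 TYPE('a::metric_space)"
  shows "full_triangle b a c = full_triangle a b (c :: 'a)" "full_triangle a c b = full_triangle a b (c :: 'a)"
proof -
  have eq: "full_triangle a' b' c' = full_triangle a b c"
    if "triangle a' b' c' = triangle a b c"
      and "\<And>p. detour_homotopic p a' b' c' \<longleftrightarrow> detour_homotopic p a b c" for a' b' c'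
  proof (rule set_eqI)
    fix p
    show "p \<in> full_triangle a' b' c' \<longleftrightarrow> p \<in> full_triangle a b c"
    proof (cases "p \<in> triangle a b c")
      case True
      then show ?thesis
        using that(1) by (simp add: full_triangle_def)
    next
      case False
      then show ?thesis
        using that full_triangle_iff_not_detour_homotopic [OF C] by metis
    qed
  qed
  show "full_triangle b a c = full_triangle a b c"
    using triangle_commute [OF C] detour_homotopic_swap [OF C] by (intro eq) blast+
  show "full_triangle a c b = full_triangle a b c"
    using triangle_commute [OF C] detour_homotopic_swap23 [OF C] by (intro eq) blast+
qed

lemma full_triangle_split:
  assumes C: "CAT0 TYPE('a::metric_space)" and p: "p \<in> full_triangle a b c"
  shows "p \<in> full_triangle a b d \<or> p \<in> full_triangle b c d \<or> p \<in> full_triangle a c (d :: 'a)"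
proof (cases "p \<in> triangle a b d \<union> triangle b c d \<union> triangle a c d")
  case True
  then show ?thesis
    unfolding full_triangle_def by blast
next
  case False
  then have "p \<notin> triangle a b c"
    using seg_commute [OF C, of c a] unfolding triangle_def by blast
  then have "\<not> detour_homotopic p a b c"
    using p full_triangle_iff_not_detour_homotopic [OF C] by blast
  then have "\<not> detour_homotopic p a b d \<or> \<not> detour_homotopic p b c d \<or> \<not> detour_homotopic p a c d"
    using detour_homotopic_cocycle [OF C] detour_homotopic_swap23 [OF C] by blast
  then show ?thesis
    using False full_triangle_iff_not_detour_homotopic [OF C] by blast
qed

theorem claim6p1:
  fixes C :: "'a::metric_space cell set" and x1 x2 x3 x4 p :: 'a and i :: nat
  assumes "euclidean_polygonal_complex C"
    and "CAT0 TYPE('a)"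
    and "i \<in> {1..4}"
    and "p \<in> Wfull x1 x2 x3 x4 i"
  shows "\<exists>j\<in>{1..4}. j \<noteq> i \<and> p \<in> Wfull x1 x2 x3 x4 j"
proof -
  note split = full_triangle_split [OF assms(2)]
  note commute = full_triangle_commute [OF assms(2)]
  have four: "{1..4} = {1, 2, 3, 4 :: nat}"
    by auto
  from assms(3) consider "i = 1" | "i = 2" | "i = 3" | "i = 4"
    by force
  then show ?thesis
  proof cases
    case 1
    then show ?thesis
      using split [of p x2 x3 x4 x1] assms(4) unfolding four by (simp add: Wfull_def) (metis commute)
  next
    case 2
    then show ?thesis
      using split [of p x1 x3 x4 x2] assms(4) unfolding four by (simp add: Wfull_def) (metis commute)
  next
    case 3
    then show ?thesis
      using split [of p x1 x2 x4 x3] assms(4) unfolding four by (simp add: Wfull_def) (metis commute(2))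
  next
    case 4
    then show ?thesis
      using split [of p x1 x2 x3 x4] assms(4) unfolding four by (simp add: Wfull_def) blast
  qed
qed

end
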